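(* Let $f:\mathbb{R}^n\to(-\infty,\infty]$ and $g:\mathbb{R}^p\to(-\infty,\infty]$ be proper closed convex functions, $A\in\mathbb{R}^{m\times n}$, $B\in\mathbb{R}^{m\times p}$, $b\in\mathbb{R}^m$, $\beta>0$, $\tilde\sigma\in[0,1)$, $G\in\mathbb{S}^n_{++}$, $H\in\mathbb{S}^p_+$, and $(\tau,\theta)\in\mathcal R_{\tilde\sigma}$. Define the set-valued operator $T$ on $\mathbb{R}^n\times\mathbb{R}^p\times\mathbb{R}^m$ and the matrix $M$ by $$T(x,y,\gamma)=\begin{bmatrix}\partial f(x)-A^*\gamma\\ \partial g(y)-B^*\gamma\\ Ax+By-b\end{bmatrix},\qquad M=\begin{bmatrix}G&0&0\\0&H+\frac{(\tau-\tau\theta+\theta)\beta}{\tau+\theta}B^*B&-\frac{\tau}{\tau+\theta}B^*\\0&-\frac{\tau}{\tau+\theta}B&\frac{1}{(\tau+\theta)\beta}I\end{bmatrix}.$$ Then $T$ is maximal monotone and $M$ is symmetric positive semidefinite.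
   Context: $\partial$ denotes the subdifferential of a convex function, $A^*$ the transpose, $\mathbb{S}^n_{++}$ ($\mathbb{S}^p_+$) the symmetric positive definite (semidefinite) $n\times n$ ($p\times p$) matrices. $\mathcal R_{\tilde\sigma}:=\{(\tau,\theta):\tau\in(-1,1-\tilde\sigma),\ \tau+\theta>0,\ (1-\tau^2)(2-\tau-\theta-\tilde\sigma)-(1-\theta)^2(1-\tau-\tilde\sigma)>0\}$. *)

theory Defs
  imports "HOL-Analysis.Analysis"
begin

definition proper_fun :: "('a \<Rightarrow> ereal) \<Rightarrow> bool" where
  "proper_fun f \<longleftrightarrow> (\<forall>x. f x \<noteq> -\<infinity>) \<and> (\<exists>x. f x \<noteq> \<infinity>)"

definition epigraph_e :: "('a \<Rightarrow> ereal) \<Rightarrow> ('a \<times> real) set" where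
  "epigraph_e f = {(x, t). f x \<le> ereal t}"

definition convex_fun :: "('a::real_vector \<Rightarrow> ereal) \<Rightarrow> bool" where
  "convex_fun f \<longleftrightarrow> convex (epigraph_e f)"

definition closed_fun :: "('a::topological_space \<Rightarrow> ereal) \<Rightarrow> bool" where
  "closed_fun f \<longleftrightarrow> closed (epigraph_e f)"

text \<open>Subdifferential (empty outside the effective domain).\<close>
definition subdiff :: "('a::real_inner \<Rightarrow> ereal) \<Rightarrow> 'a \<Rightarrow> 'a set" where
  "subdiff f x = {v. f x \<noteq> \<infinity> \<and> (\<forall>y. f x + ereal (inner v (y - x)) \<le> f y)}"

definition monotone_op :: "('a::real_inner \<Rightarrow> 'a set) \<Rightarrow> bool" where
  "monotone_op T \<longleftrightarrow> (\<forall>x y u v. u \<in> T x \<longrightarrow> v \<in> T y \<longrightarrow> 0 \<le> inner (x - y) (u - v))"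

definition maximal_monotone :: "('a::real_inner \<Rightarrow> 'a set) \<Rightarrow> bool" where
  "maximal_monotone T \<longleftrightarrow> monotone_op T \<and>
     (\<forall>S. monotone_op S \<and> (\<forall>x. T x \<subseteq> S x) \<longrightarrow> S = T)"

definition symmetric_mat :: "real^'n^'n \<Rightarrow> bool" where
  "symmetric_mat M \<longleftrightarrow> transpose M = M"

definition psd_mat :: "real^'n^'n \<Rightarrow> bool" where
  "psd_mat M \<longleftrightarrow> symmetric_mat M \<and> (\<forall>x. 0 \<le> x \<bullet> (M *v x))"

definition pd_mat :: "real^'n^'n \<Rightarrow> bool" where
  "pd_mat M \<longleftrightarrow> symmetric_mat M \<and> (\<forall>x. x \<noteq> 0 \<longrightarrow> 0 < x \<bullet> (M *v x))"

definition region_R :: "real \<Rightarrow> (real \<times> real) set" where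
  "region_R s = {(\<tau>, \<theta>). -1 < \<tau> \<and> \<tau> < 1 - s \<and> 0 < \<tau> + \<theta> \<and>
      (1 - \<tau>^2) * (2 - \<tau> - \<theta> - s) - (1 - \<theta>)^2 * (1 - \<tau> - s) > 0}"

definition T_op :: "(real^'n \<Rightarrow> ereal) \<Rightarrow> (real^'p \<Rightarrow> ereal) \<Rightarrow> real^'n^'m \<Rightarrow> real^'p^'m \<Rightarrow> real^'m
   \<Rightarrow> ((real^'n) \<times> (real^'p) \<times> (real^'m)) \<Rightarrow> ((real^'n) \<times> (real^'p) \<times> (real^'m)) set" where
  "T_op f g A B b = (\<lambda>(x, y, \<gamma>).
     {(u - transpose A *v \<gamma>, v - transpose B *v \<gamma>, A *v x + B *v y - b) | u v.
        u \<in> subdiff f x \<and> v \<in> subdiff g y})"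

definition block3 ::
  "real^'n^'n \<Rightarrow> real^'p^'n \<Rightarrow> real^'m^'n \<Rightarrow>
   real^'n^'p \<Rightarrow> real^'p^'p \<Rightarrow> real^'m^'p \<Rightarrow>
   real^'n^'m \<Rightarrow> real^'p^'m \<Rightarrow> real^'m^'m \<Rightarrow> real^('n + ('p + 'm))^('n + ('p + 'm))" where
  "block3 M11 M12 M13 M21 M22 M23 M31 M32 M33 = (\<chi> i j.
     (case i of
        Inl a \<Rightarrow> (case j of Inl c \<Rightarrow> M11 $ a $ c | Inr (Inl c) \<Rightarrow> M12 $ a $ c | Inr (Inr c) \<Rightarrow> M13 $ a $ c)
      | Inr (Inl a) \<Rightarrow> (case j of Inl c \<Rightarrow> M21 $ a $ c | Inr (Inl c) \<Rightarrow> M22 $ a $ c | Inr (Inr c) \<Rightarrow> M23 $ a $ c)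
      | Inr (Inr a) \<Rightarrow> (case j of Inl c \<Rightarrow> M31 $ a $ c | Inr (Inl c) \<Rightarrow> M32 $ a $ c | Inr (Inr c) \<Rightarrow> M33 $ a $ c)))"

definition M_mat :: "real^'n^'n \<Rightarrow> real^'p^'p \<Rightarrow> real^'p^'m \<Rightarrow> real \<Rightarrow> real \<Rightarrow> real
   \<Rightarrow> real^('n + ('p + 'm))^('n + ('p + 'm))" where
  "M_mat G H B \<beta> \<tau> \<theta> = block3
     G 0 0
     0 (H + (((\<tau> - \<tau> * \<theta> + \<theta>) * \<beta>) / (\<tau> + \<theta>)) *\<^sub>R (transpose B ** B)) ((- \<tau> / (\<tau> + \<theta>)) *\<^sub>R transpose B)
     0 ((- \<tau> / (\<tau> + \<theta>)) *\<^sub>R B) ((1 / ((\<tau> + \<theta>) * \<beta>)) *\<^sub>R mat 1)"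

end

theory Submission
  imports Defs
begin

(* T is z |-> (subdiff f x, subdiff g y, -b) - K z with the skew-symmetric linear map
   K (x, y, gamma) = (A^T gamma, B^T gamma, -(A x + B y)). Subdifferentials are monotone and
   K drops out of the monotonicity pairing, so T is monotone. For maximality it suffices (the
   easy half of Minty's theorem) that z + K z + T z exhausts the space; this operator is the
   product of I + subdiff f, I + subdiff g and the shift by -b, and I + subdiff f is onto because
   the proximal point, the minimizer of f y + |y - p|^2 / 2, exists: a closed proper convex f is
   bounded below on a ball, hence by convexity minorized by m - C |y - p|, so the proximal
   objective has compact sublevel sets on the epigraph.
   Completing the square in the last block gives
   x^T M x = x1^T G x1 + x2^T H x2 + beta (1 - tau) |B x2|^2
             + |x3 - tau beta B x2|^2 / ((tau + theta) beta),
   which is nonnegative since tau < 1 and tau + theta > 0 on the region. *)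

lemma convex_funD:
  fixes f :: "'a::real_vector \<Rightarrow> ereal"
  assumes "convex_fun f" "f x \<le> ereal a" "f y \<le> ereal c" "0 \<le> t" "t \<le> 1"
  shows "f ((1 - t) *\<^sub>R x + t *\<^sub>R y) \<le> ereal ((1 - t) * a + t * c)"
proof -
  have "(1 - t) *\<^sub>R (x, a) + t *\<^sub>R (y, c) \<in> epigraph_e f"
    using assms unfolding convex_fun_def by (intro convexD) (simp_all add: epigraph_e_def)
  then show ?thesis by (simp add: epigraph_e_def)
qed

lemma closed_fun_sublevel:
  fixes f :: "'a::topological_space \<Rightarrow> ereal"
  assumes "closed_fun f"
  shows "closed {x. f x \<le> ereal t}"
proof -
  have "{x. f x \<le> ereal t} = (\<lambda>x. (x, t)) -` epigraph_e f"
    by (auto simp: epigraph_e_def)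
  moreover have "closed ((\<lambda>x. (x, t)) -` epigraph_e f)"
    using assms unfolding closed_fun_def by (intro closed_vimage continuous_intros)
  ultimately show ?thesis by simp
qed

lemma closed_fun_bounded_below_on_compact:
  fixes f :: "'a::topological_space \<Rightarrow> ereal"
  assumes "proper_fun f" "closed_fun f" "compact K"
  shows "\<exists>m. \<forall>x\<in>K. ereal m \<le> f x"
proof -
  define U where "U n = - {x. f x \<le> ereal (- real n)}" for n :: nat
  have "open (U n)" for n
    unfolding U_def using closed_fun_sublevel[OF assms(2)] by auto
  moreover have "K \<subseteq> (\<Union>n. U n)"
  proof
    fix x assume "x \<in> K"
    have "f x \<noteq> -\<infinity>" using assms(1) by (auto simp: proper_fun_def)
    then obtain n :: nat where "ereal (- real n) < f x"
    proof (cases "f x")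
      case (real r)
      obtain n :: nat where "- r < real n" using reals_Archimedean2 by blast
      with real that[of n] show ?thesis by simp
    next
      case PInf
      with that[of 0] show ?thesis by simp
    qed (use \<open>f x \<noteq> -\<infinity>\<close> in simp)
    then show "x \<in> (\<Union>n. U n)" by (auto simp: U_def not_le)
  qed
  ultimately obtain D where D: "finite D" "K \<subseteq> (\<Union>n\<in>D. U n)"
    by (metis compactE_image[OF assms(3), of UNIV U])
  have "ereal (- real (Max (insert 0 D))) \<le> f x" if "x \<in> K" for x
  proof -
    obtain n where n: "n \<in> D" "x \<in> U n" using D \<open>x \<in> K\<close> by auto
    then have "ereal (- real (Max (insert 0 D))) \<le> ereal (- real n)" using D(1) by simp
    also have "\<dots> \<le> f x" using n(2) by (simp add: U_def)
    finally show ?thesis .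
  qed
  then show ?thesis by blast
qed

lemma convex_fun_lower_bound_at:
  fixes f :: "'a::euclidean_space \<Rightarrow> ereal"
  assumes "proper_fun f" "closed_fun f" "convex_fun f" "f x1 = ereal a"
  shows "\<exists>m C. 0 \<le> C \<and> (\<forall>x. ereal (m - C * norm (x - x1)) \<le> f x)"
proof -
  obtain m where m: "\<And>x. x \<in> cball x1 1 \<Longrightarrow> ereal m \<le> f x"
    using closed_fun_bounded_below_on_compact[OF assms(1,2) compact_cball] by blast
  have ma: "m \<le> a" using m[of x1] assms(4) by simp
  have "ereal (m - (a - m) * norm (x - x1)) \<le> f x" for x
  proof (cases "norm (x - x1) \<le> 1")
    case True
    then have "ereal m \<le> f x" by (intro m) (simp add: dist_norm norm_minus_commute)
    moreover have "0 \<le> (a - m) * norm (x - x1)" using ma by simp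
    ultimately show ?thesis by (smt (verit) ereal_less_eq(3) order_trans)
  next
    case False
    define r where "r = norm (x - x1)"
    have r1: "1 < r" using False by (simp add: r_def)
    show ?thesis
    proof (cases "f x")
      case (real c)
      define x' where "x' = (1 - 1 / r) *\<^sub>R x1 + (1 / r) *\<^sub>R x"
      have "x' - x1 = (1 / r) *\<^sub>R (x - x1)"
        by (simp add: x'_def algebra_simps)
      then have "norm (x' - x1) = 1"
        using r1 by (auto simp: r_def)
      then have "ereal m \<le> f x'" by (intro m) (simp add: dist_norm norm_minus_commute)
      also have "\<dots> \<le> ereal ((1 - 1 / r) * a + (1 / r) * c)"
        unfolding x'_def using r1 assms(3,4) real by (intro convex_funD) auto
      finally have "r * m \<le> (r - 1) * a + c"
        using r1 by (simp add: field_simps)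
      then show ?thesis
        using real ma by (simp add: r_def algebra_simps)
    qed (use assms(1) in \<open>auto simp: proper_fun_def\<close>)
  qed
  then show ?thesis using ma by (intro exI[of _ m] exI[of _ "a - m"]) auto
qed

lemma convex_fun_lower_bound:
  fixes f :: "'a::euclidean_space \<Rightarrow> ereal"
  assumes "proper_fun f" "closed_fun f" "convex_fun f"
  shows "\<exists>m C. 0 \<le> C \<and> (\<forall>x. ereal (m - C * norm (x - p)) \<le> f x)"
proof -
  obtain x1 a where "f x1 = ereal a"
    using assms(1) unfolding proper_fun_def by (metis ereal_cases)
  then obtain m C where C: "0 \<le> C" and mC: "\<And>x. ereal (m - C * norm (x - x1)) \<le> f x"
    using convex_fun_lower_bound_at[OF assms] by blast
  have "ereal (m - C * norm (p - x1) - C * norm (x - p)) \<le> f x" for x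
  proof -
    have "norm (x - x1) \<le> norm (x - p) + norm (p - x1)"
      using norm_triangle_ineq[of "x - p" "p - x1"] by simp
    then have "C * norm (x - x1) \<le> C * norm (x - p) + C * norm (p - x1)"
      using C by (metis distrib_left mult_left_mono)
    then have "m - C * norm (p - x1) - C * norm (x - p) \<le> m - C * norm (x - x1)"
      by simp
    then show ?thesis using mC[of x] order_trans ereal_less_eq(3) by blast
  qed
  then show ?thesis using C by blast
qed

lemma quadratic_le_linear_bound:
  fixes u C k :: real
  assumes "0 \<le> C" "u\<^sup>2 / 2 - C * u \<le> k"
  shows "u \<le> 2 * C + 2 * \<bar>k\<bar> + 2"
proof (rule ccontr)
  assume "\<not> ?thesis"
  then have "1 * (\<bar>k\<bar> + 1) < u * (u / 2 - C)"
    using assms(1) by (intro mult_strict_mono) auto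
  with assms(2) show False by (simp add: power2_eq_square algebra_simps)
qed

lemma compact_prox_sublevel:
  fixes f :: "'a::euclidean_space \<Rightarrow> ereal"
  assumes "proper_fun f" "closed_fun f" "convex_fun f"
  shows "compact (epigraph_e f \<inter> {(y, t). t + (norm (y - p))\<^sup>2 / 2 \<le> h})"
    (is "compact (_ \<inter> ?Q)")
proof -
  obtain m C where C: "0 \<le> C" and mC: "\<And>x. ereal (m - C * norm (x - p)) \<le> f x"
    using convex_fun_lower_bound[OF assms] by blast
  define R where "R = 2 * C + 2 * \<bar>h - m\<bar> + 2"
  have "(y, t) \<in> cball p R \<times> {m - C * R..h}"
    if epi: "(y, t) \<in> epigraph_e f" and Q: "t + (norm (y - p))\<^sup>2 / 2 \<le> h" for y t
  proof -
    have lower: "m - C * norm (y - p) \<le> t"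
      using mC[of y] epi by (simp add: epigraph_e_def) (metis ereal_less_eq(3) order_trans)
    with Q have R: "norm (y - p) \<le> R"
      unfolding R_def using C by (intro quadratic_le_linear_bound) auto
    have "C * norm (y - p) \<le> C * R" using R C by (rule mult_left_mono)
    moreover have "t \<le> h" using Q zero_le_power2[of "norm (y - p)"] by linarith
    ultimately show "(y, t) \<in> cball p R \<times> {m - C * R..h}"
      using R lower Q by (simp add: dist_norm norm_minus_commute)
  qed
  then have "epigraph_e f \<inter> ?Q \<subseteq> cball p R \<times> {m - C * R..h}"
    by auto
  moreover have "closed ?Q"
    unfolding case_prod_unfold by (intro closed_Collect_le continuous_intros) auto
  then have "closed (epigraph_e f \<inter> ?Q)"
    using assms(2) unfolding closed_fun_def by blast
  ultimately show ?thesis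
    by (metis compact_Icc compact_Times compact_cball compact_Int_closed inf.absorb_iff2)
qed

lemma prox_minimizer_exists:
  fixes f :: "'a::euclidean_space \<Rightarrow> ereal"
  assumes "proper_fun f" "closed_fun f" "convex_fun f"
  shows "\<exists>z a. f z = ereal a \<and>
    (\<forall>y c. f y = ereal c \<longrightarrow> a + (norm (z - p))\<^sup>2 / 2 \<le> c + (norm (y - p))\<^sup>2 / 2)"
proof -
  define Q where "Q = (\<lambda>(y, t). t + (norm (y - p))\<^sup>2 / 2)"
  obtain x1 a1 where x1: "f x1 = ereal a1"
    using assms(1) unfolding proper_fun_def by (metis ereal_cases)
  define S where "S = epigraph_e f \<inter> {w. Q w \<le> Q (x1, a1)}"
  have "compact S"
    unfolding S_def Q_def using compact_prox_sublevel[OF assms] by (simp add: case_prod_unfold)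
  moreover have x1S: "(x1, a1) \<in> S" using x1 by (simp add: S_def epigraph_e_def)
  moreover have "continuous_on S Q"
    unfolding Q_def case_prod_unfold by (intro continuous_intros) auto
  ultimately obtain z t where zt: "(z, t) \<in> S" and min: "\<And>w. w \<in> S \<Longrightarrow> Q (z, t) \<le> Q w"
    using continuous_attains_inf[of S Q] by (metis empty_iff surj_pair)
  have "f z \<le> ereal t" "f z \<noteq> -\<infinity>"
    using zt assms(1) by (auto simp: S_def epigraph_e_def proper_fun_def)
  then obtain a where a: "f z = ereal a" "a \<le> t" by (cases "f z") auto
  have "Q (z, t) \<le> Q (y, c)" if "f y = ereal c" for y c
  proof (cases "(y, c) \<in> S")
    case False
    with that have "Q (x1, a1) < Q (y, c)" by (auto simp: S_def epigraph_e_def)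
    with min[OF x1S] show ?thesis by simp
  qed (rule min)
  with a show ?thesis by (fastforce simp: Q_def)
qed

lemma nonpos_if_le_small_multiples:
  fixes D N :: real
  assumes "\<And>t. 0 < t \<Longrightarrow> t \<le> 1 \<Longrightarrow> D \<le> t * N"
  shows "D \<le> 0"
proof (rule ccontr)
  assume "\<not> D \<le> 0"
  define t where "t = min 1 (D / (\<bar>N\<bar> + 1))"
  have t: "0 < t" "t \<le> 1" using \<open>\<not> D \<le> 0\<close> by (auto simp: t_def)
  have "t * N \<le> t * \<bar>N\<bar>" using t by (intro mult_left_mono) auto
  also have "\<dots> \<le> D / (\<bar>N\<bar> + 1) * \<bar>N\<bar>" by (intro mult_right_mono) (auto simp: t_def)
  also have "\<dots> < D" using \<open>\<not> D \<le> 0\<close> by (simp add: field_simps)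
  finally show False using assms[OF t] by simp
qed

lemma prox_minimizer_subgradient:
  fixes f :: "'a::real_inner \<Rightarrow> ereal"
  assumes "proper_fun f" "convex_fun f" "f z = ereal a"
    and min: "\<And>y c. f y = ereal c \<Longrightarrow> a + (norm (z - p))\<^sup>2 / 2 \<le> c + (norm (y - p))\<^sup>2 / 2"
  shows "p - z \<in> subdiff f z"
  unfolding subdiff_def
proof (intro CollectI conjI allI)
  show "f z \<noteq> \<infinity>" using assms(3) by simp
  fix y
  show "f z + ereal ((p - z) \<bullet> (y - z)) \<le> f y"
  proof (cases "f y")
    case (real c)
    have "a - c + (p - z) \<bullet> (y - z) \<le> t * ((norm (y - z))\<^sup>2 / 2)" if t: "0 < t" "t \<le> 1" for t
    proof -
      define yt where "yt = (1 - t) *\<^sub>R z + t *\<^sub>R y"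
      have "f yt \<le> ereal ((1 - t) * a + t * c)" "f yt \<noteq> -\<infinity>"
        unfolding yt_def using convex_funD[OF assms(2)] assms(1,3) real t
        by (auto simp: proper_fun_def)
      then obtain ct where ct: "f yt = ereal ct" "ct \<le> (1 - t) * a + t * c"
        by (cases "f yt") auto
      have shift: "yt - p = (z - p) + t *\<^sub>R (y - z)" by (simp add: yt_def algebra_simps)
      have "(norm (yt - p))\<^sup>2 =
          (norm (z - p))\<^sup>2 + 2 * t * ((z - p) \<bullet> (y - z)) + t\<^sup>2 * (norm (y - z))\<^sup>2"
        unfolding shift using dot_norm[of "z - p" "t *\<^sub>R (y - z)"] by (simp add: power_mult_distrib)
      with min[OF ct(1)] ct(2)
      have "t * (a - c + (p - z) \<bullet> (y - z)) \<le> t * (t * ((norm (y - z))\<^sup>2 / 2))"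
        by (simp add: algebra_simps power2_eq_square inner_diff_left)
      with t show ?thesis by simp
    qed
    then have "a - c + (p - z) \<bullet> (y - z) \<le> 0" by (rule nonpos_if_le_small_multiples)
    then show ?thesis using real assms(3) by simp
  qed (use assms in \<open>auto simp: proper_fun_def\<close>)
qed

lemma subdiff_prox_point:
  fixes f :: "'a::euclidean_space \<Rightarrow> ereal"
  assumes "proper_fun f" "closed_fun f" "convex_fun f"
  shows "\<exists>x. p - x \<in> subdiff f x"
  using prox_minimizer_exists[OF assms] prox_minimizer_subgradient[OF assms(1,3)] by blast

lemma monotone_subdiff:
  assumes "proper_fun f"
  shows "monotone_op (subdiff f)"
  unfolding monotone_op_def
proof (intro allI impI)
  fix x y u v assume u: "u \<in> subdiff f x" and v: "v \<in> subdiff f y"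
  have "f x \<noteq> \<infinity>" "f y \<noteq> \<infinity>" "f x \<noteq> -\<infinity>" "f y \<noteq> -\<infinity>"
    using assms u v by (auto simp: subdiff_def proper_fun_def)
  then obtain a c where fxy: "f x = ereal a" "f y = ereal c"
    by (cases "f x"; cases "f y") auto
  have "f x + ereal (u \<bullet> (y - x)) \<le> f y" "f y + ereal (v \<bullet> (x - y)) \<le> f x"
    using u v by (auto simp: subdiff_def)
  then have "a + u \<bullet> (y - x) \<le> c" "c + v \<bullet> (x - y) \<le> a"
    using fxy by auto
  then show "0 \<le> (x - y) \<bullet> (u - v)"
    by (simp add: inner_diff_left inner_diff_right inner_commute algebra_simps)
qed

lemma inner_transpose: "(x::real^'n::finite) \<bullet> (transpose A *v y) = (A *v x) \<bullet> y"
  by (metis dot_lmul_matrix inner_commute transpose_matrix_vector)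

lemma maximal_monotoneI_surj:
  fixes T :: "'a::real_inner \<Rightarrow> 'a set"
  assumes T: "monotone_op T" and K: "linear K" "\<And>z. 0 \<le> z \<bullet> K z"
    and surj: "\<And>q. \<exists>z. \<exists>w\<in>T z. z + K z + w = q"
  shows "maximal_monotone T"
  unfolding maximal_monotone_def
proof (intro conjI allI impI T)
  fix S assume S: "monotone_op S \<and> (\<forall>z. T z \<subseteq> S z)"
  have "S z0 \<subseteq> T z0" for z0
  proof
    fix w0 assume w0: "w0 \<in> S z0"
    obtain z w where w: "w \<in> T z" and zw: "z + K z + w = z0 + K z0 + w0"
      using surj by blast
    define d where "d = z - z0"
    have "w0 - w = d + K d"
      using zw by (simp add: d_def linear_diff[OF K(1)] algebra_simps)
    moreover have "0 \<le> (z0 - z) \<bullet> (w0 - w)"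
      using S w0 w unfolding monotone_op_def by blast
    ultimately have "d \<bullet> d + d \<bullet> K d \<le> 0"
      by (simp add: d_def inner_add_right inner_diff_left)
    with K(2)[of d] have "d \<bullet> d \<le> 0" by linarith
    then have "d = 0" by (metis antisym inner_eq_zero_iff inner_ge_zero)
    with zw show "w0 \<in> T z0" using w by (simp add: d_def)
  qed
  with S show "S = T" by blast
qed

definition skew_coupling :: "real^'n^'m \<Rightarrow> real^'p^'m
    \<Rightarrow> (real^'n) \<times> (real^'p) \<times> (real^'m) \<Rightarrow> (real^'n) \<times> (real^'p) \<times> (real^'m)" where
  "skew_coupling A B = (\<lambda>(x, y, \<gamma>). (transpose A *v \<gamma>, transpose B *v \<gamma>, - (A *v x + B *v y)))"

lemma linear_skew_coupling: "linear (skew_coupling A B)"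
  by (rule linearI) (auto simp: skew_coupling_def algebra_simps simp del: transpose_matrix_vector)

lemma inner_skew_coupling_self: "z \<bullet> skew_coupling A B z = 0"
  by (cases z)
    (simp add: skew_coupling_def inner_transpose inner_add_right inner_diff_right inner_commute
      del: transpose_matrix_vector)

lemma T_op_iff:
  "w \<in> T_op f g A B b (x, y, \<gamma>) \<longleftrightarrow>
    (\<exists>u\<in>subdiff f x. \<exists>v\<in>subdiff g y. w = (u, v, - b) - skew_coupling A B (x, y, \<gamma>))"
  by (auto simp: T_op_def skew_coupling_def simp del: transpose_matrix_vector)

lemma T_op_monotone:
  assumes "proper_fun f" "proper_fun g"
  shows "monotone_op (T_op f g A B b)"
  unfolding monotone_op_def
proof (intro allI impI)
  fix z z' w w'
  assume w: "w \<in> T_op f g A B b z" and w': "w' \<in> T_op f g A B b z'"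
  obtain x y \<gamma> x' y' \<gamma>' where z: "z = (x, y, \<gamma>)" "z' = (x', y', \<gamma>')"
    by (cases z; cases z') auto
  obtain u v u' v'
    where uv: "u \<in> subdiff f x" "v \<in> subdiff g y" "u' \<in> subdiff f x'" "v' \<in> subdiff g y'"
    and "w = (u, v, - b) - skew_coupling A B z" "w' = (u', v', - b) - skew_coupling A B z'"
    using w w' unfolding z T_op_iff by blast
  then have ww: "w - w' = (u - u', v - v', 0) - skew_coupling A B (z - z')"
    by (simp add: linear_diff[OF linear_skew_coupling])
  have "(z - z') \<bullet> (w - w') = (x - x') \<bullet> (u - u') + (y - y') \<bullet> (v - v')"
    unfolding ww inner_diff_right[of "z - z'"] inner_skew_coupling_self by (simp add: z)
  moreover have "0 \<le> (x - x') \<bullet> (u - u')" "0 \<le> (y - y') \<bullet> (v - v')"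
    using uv monotone_subdiff assms unfolding monotone_op_def by blast+
  ultimately show "0 \<le> (z - z') \<bullet> (w - w')" by simp
qed

lemma T_op_maximal_monotone:
  fixes f :: "real^'n::finite \<Rightarrow> ereal" and g :: "real^'p::finite \<Rightarrow> ereal"
    and A :: "real^'n^'m::finite" and B :: "real^'p^'m" and b :: "real^'m"
  assumes "proper_fun f" "closed_fun f" "convex_fun f"
    and "proper_fun g" "closed_fun g" "convex_fun g"
  shows "maximal_monotone (T_op f g A B b)"
proof (rule maximal_monotoneI_surj)
  show "monotone_op (T_op f g A B b)" using T_op_monotone assms by blast
  show "linear (skew_coupling A B)" "\<And>z. 0 \<le> z \<bullet> skew_coupling A B z"
    by (simp_all add: linear_skew_coupling inner_skew_coupling_self)
  fix q :: "(real^'n) \<times> (real^'p) \<times> (real^'m)"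
  obtain q1 q2 q3 where q: "q = (q1, q2, q3)" by (cases q) auto
  obtain x y where "q1 - x \<in> subdiff f x" "q2 - y \<in> subdiff g y"
    using subdiff_prox_point assms by metis
  then have "(q1 - x, q2 - y, - b) - skew_coupling A B (x, y, q3 + b) \<in> T_op f g A B b (x, y, q3 + b)"
    unfolding T_op_iff by blast
  then show "\<exists>z. \<exists>w\<in>T_op f g A B b z. z + skew_coupling A B z + w = q"
    by (intro exI bexI[of _ "(q1 - x, q2 - y, - b) - skew_coupling A B (x, y, q3 + b)"]) (auto simp: q)
qed

definition block_fst :: "real^('n::finite + ('p::finite + 'm::finite)) \<Rightarrow> real^'n" where
  "block_fst x = (\<chi> i. x $ Inl i)"

definition block_mid :: "real^('n::finite + ('p::finite + 'm::finite)) \<Rightarrow> real^'p" where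
  "block_mid x = (\<chi> i. x $ Inr (Inl i))"

definition block_lst :: "real^('n::finite + ('p::finite + 'm::finite)) \<Rightarrow> real^'m" where
  "block_lst x = (\<chi> i. x $ Inr (Inr i))"

lemma quadratic_form_block3:
  fixes x :: "real^('n::finite + ('p::finite + 'm::finite))"
  shows "x \<bullet> (block3 M11 M12 M13 M21 M22 M23 M31 M32 M33 *v x) =
    block_fst x \<bullet> (M11 *v block_fst x + M12 *v block_mid x + M13 *v block_lst x) +
    block_mid x \<bullet> (M21 *v block_fst x + M22 *v block_mid x + M23 *v block_lst x) +
    block_lst x \<bullet> (M31 *v block_fst x + M32 *v block_mid x + M33 *v block_lst x)"
proof -
  have split: "sum h UNIV =
      (\<Sum>a\<in>UNIV. h (Inl a)) + (\<Sum>a\<in>UNIV. h (Inr (Inl a))) + (\<Sum>a\<in>UNIV. h (Inr (Inr a)))"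
    for h :: "'n + ('p + 'm) \<Rightarrow> real"
    by (simp flip: UNIV_Plus_UNIV add: sum.Plus add.assoc)
  show ?thesis
    unfolding inner_vec_def matrix_vector_mult_def block3_def block_fst_def block_mid_def block_lst_def
    by (simp add: split[where h="\<lambda>j. _ j"] sum_distrib_left sum.distrib)
qed

lemma transpose_block3:
  "transpose (block3 M11 M12 M13 M21 M22 M23 M31 M32 M33) =
    block3 (transpose M11) (transpose M21) (transpose M31)
           (transpose M12) (transpose M22) (transpose M32)
           (transpose M13) (transpose M23) (transpose M33)"
  by (simp add: vec_eq_iff transpose_def block3_def split: sum.split)

lemma transpose_zero [simp]: "transpose 0 = 0"
  by (simp add: transpose_def vec_eq_iff)

lemma transpose_add: "transpose (A + B) = transpose A + transpose B"
  by (simp add: transpose_def vec_eq_iff)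

lemma symmetric_M_mat:
  assumes "symmetric_mat G" "symmetric_mat H"
  shows "symmetric_mat (M_mat G H B \<beta> \<tau> \<theta>)"
  using assms unfolding symmetric_mat_def M_mat_def transpose_block3
  by (simp only: transpose_add transpose_scalar matrix_transpose_mul transpose_transpose transpose_zero transpose_mat)

lemma quadratic_form_M_mat:
  fixes G :: "real^'n::finite^'n" and H :: "real^'p::finite^'p" and B :: "real^'p^'m::finite"
  assumes "\<tau> + \<theta> \<noteq> 0" "\<beta> \<noteq> 0"
  shows "x \<bullet> (M_mat G H B \<beta> \<tau> \<theta> *v x) =
    block_fst x \<bullet> (G *v block_fst x) + block_mid x \<bullet> (H *v block_mid x)
    + \<beta> * (1 - \<tau>) * (norm (B *v block_mid x))\<^sup>2
    + (norm (block_lst x - (\<tau> * \<beta>) *\<^sub>R (B *v block_mid x)))\<^sup>2 / ((\<tau> + \<theta>) * \<beta>)"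
proof -
  define u where "u = B *v block_mid x"
  define w where "w = block_lst x"
  have "x \<bullet> (M_mat G H B \<beta> \<tau> \<theta> *v x) =
    block_fst x \<bullet> (G *v block_fst x) + block_mid x \<bullet> (H *v block_mid x)
    + (\<tau> - \<tau> * \<theta> + \<theta>) * \<beta> / (\<tau> + \<theta>) * (u \<bullet> u)
    - 2 * (\<tau> / (\<tau> + \<theta>)) * (u \<bullet> w) + (w \<bullet> w) / ((\<tau> + \<theta>) * \<beta>)"
    unfolding M_mat_def quadratic_form_block3 u_def w_def
    by (simp only: matrix_vector_mult_add_rdistrib matrix_vector_mul_assoc[symmetric]
        scaleR_matrix_vector_assoc[symmetric] matrix_vector_mult_0 matrix_vector_mul_lid)
      (simp add: inner_add_right inner_diff_right inner_transpose inner_commute algebra_simps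
        del: transpose_matrix_vector)
  also have "\<dots> = block_fst x \<bullet> (G *v block_fst x) + block_mid x \<bullet> (H *v block_mid x)
    + \<beta> * (1 - \<tau>) * (norm u)\<^sup>2 + (norm (w - (\<tau> * \<beta>) *\<^sub>R u))\<^sup>2 / ((\<tau> + \<theta>) * \<beta>)"
    using assms unfolding power2_norm_eq_inner
    by (simp add: inner_diff_left inner_diff_right inner_commute divide_simps) (simp add: algebra_simps)
  finally show ?thesis by (simp add: u_def w_def)
qed

lemma psd_M_mat:
  fixes G :: "real^'n::finite^'n" and H :: "real^'p::finite^'p" and B :: "real^'p^'m::finite"
  assumes "psd_mat G" "psd_mat H" "0 < \<beta>" "0 < \<tau> + \<theta>" "\<tau> \<le> 1"
  shows "psd_mat (M_mat G H B \<beta> \<tau> \<theta>)"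
  unfolding psd_mat_def
proof
  show "symmetric_mat (M_mat G H B \<beta> \<tau> \<theta>)"
    using assms(1,2) symmetric_M_mat unfolding psd_mat_def by blast
  show "\<forall>x. 0 \<le> x \<bullet> (M_mat G H B \<beta> \<tau> \<theta> *v x)"
    using assms unfolding psd_mat_def by (simp add: quadratic_form_M_mat)
qed

lemma pd_mat_imp_psd_mat: "pd_mat M \<Longrightarrow> psd_mat M"
  unfolding pd_mat_def psd_mat_def by (metis inner_zero_left order.order_iff_strict)

theorem proposition2p1:
  fixes f :: "real^'n \<Rightarrow> ereal" and g :: "real^'p \<Rightarrow> ereal"
    and A :: "real^'n^'m" and B :: "real^'p^'m" and b :: "real^'m"
    and G :: "real^'n^'n" and H :: "real^'p^'p"
    and \<beta> \<sigma> \<tau> \<theta> :: real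
  assumes "proper_fun f" "closed_fun f" "convex_fun f"
    and "proper_fun g" "closed_fun g" "convex_fun g"
    and "\<beta> > 0" and "0 \<le> \<sigma>" and "\<sigma> < 1"
    and "pd_mat G" and "psd_mat H"
    and "(\<tau>, \<theta>) \<in> region_R \<sigma>"
  shows "maximal_monotone (T_op f g A B b) \<and> psd_mat (M_mat G H B \<beta> \<tau> \<theta>)"
proof
  show "maximal_monotone (T_op f g A B b)"
    using T_op_maximal_monotone assms(1-6) by blast
  have "0 < \<tau> + \<theta>" "\<tau> \<le> 1"
    using assms(8,12) by (auto simp: region_R_def)
  then show "psd_mat (M_mat G H B \<beta> \<tau> \<theta>)"
    using psd_M_mat pd_mat_imp_psd_mat assms(7,10,11) by blast
qed

end
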